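(* Let $\mathcal{A}=(a_{ijk})\in\mathbb{R}^{n\times n\times n}$ be a piezoelectric-type tensor. Define the fourth-order tensor $\mathcal{B}=(b_{i_1i_2i_3i_4})\in\mathbb{R}^{n\times n\times n\times n}$ by $b_{i_1i_2i_3i_4}=\sum_{i=1}^n a_{ii_1i_2}a_{ii_3i_4}$ for all $i_1,i_2,i_3,i_4\in\{1,\dots,n\}$, and the tensor $\bar{\mathcal{B}}=(\bar b_{i_1i_2i_3i_4})$ by $$\bar b_{i_1i_2i_3i_4}=\tfrac13\big(b_{i_1i_2i_3i_4}+b_{i_1i_3i_2i_4}+b_{i_1i_4i_2i_3}\big).$$ Then $\bar{\mathcal{B}}$ is positive semi-definite, i.e. $$\bar{\mathcal{B}}\mathbf{x}^4=\sum_{i_1,i_2,i_3,i_4=1}^n \bar b_{i_1i_2i_3i_4}x_{i_1}x_{i_2}x_{i_3}x_{i_4}\ge 0\quad\text{for all }\mathbf{x}\in\mathbb{R}^n.$$ Consequently, all $Z$-eigenvalues of $\bar{\mathcal{B}}$ are nonnegative.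
   Context: A third-order tensor $\mathcal{A}=(a_{ijk})\in\mathbb{R}^{n\times n\times n}$ is called piezoelectric-type if $a_{ijk}=a_{ikj}$ for all $i,j,k\in\{1,\dots,n\}$. For a fourth-order tensor $\mathcal{T}=(t_{i_1i_2i_3i_4})$ and $\mathbf{x}\in\mathbb{R}^n$, $\mathcal{T}\mathbf{x}^3\in\mathbb{R}^n$ is the vector with $i$-th entry $\sum_{i_2,i_3,i_4}t_{ii_2i_3i_4}x_{i_2}x_{i_3}x_{i_4}$. A real number $\lambda$ is a $Z$-eigenvalue of $\mathcal{T}$ if there is $\mathbf{x}\in\mathbb{R}^n$ with $\mathcal{T}\mathbf{x}^3=\lambda\mathbf{x}$ and $\mathbf{x}^T\mathbf{x}=1$. *)

theory Defs
  imports "HOL-Analysis.Analysis"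
begin

type_synonym 'n tensor3 = "'n \<Rightarrow> 'n \<Rightarrow> 'n \<Rightarrow> real"
type_synonym 'n tensor4 = "'n \<Rightarrow> 'n \<Rightarrow> 'n \<Rightarrow> 'n \<Rightarrow> real"

definition piezo_type :: "('n::finite) tensor3 \<Rightarrow> bool" where
  "piezo_type A \<longleftrightarrow> (\<forall>i j k. A i j k = A i k j)"

definition tensorB :: "('n::finite) tensor3 \<Rightarrow> 'n tensor4" where
  "tensorB A = (\<lambda>i1 i2 i3 i4. \<Sum>i\<in>UNIV. A i i1 i2 * A i i3 i4)"

definition tensorBbar :: "('n::finite) tensor3 \<Rightarrow> 'n tensor4" where
  "tensorBbar A = (let b = tensorB A in
     (\<lambda>i1 i2 i3 i4. (b i1 i2 i3 i4 + b i1 i3 i2 i4 + b i1 i4 i2 i3) / 3))"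

definition tensor4_form :: "('n::finite) tensor4 \<Rightarrow> real ^ 'n \<Rightarrow> real" where
  "tensor4_form T x = (\<Sum>i1\<in>UNIV. \<Sum>i2\<in>UNIV. \<Sum>i3\<in>UNIV. \<Sum>i4\<in>UNIV.
      T i1 i2 i3 i4 * x$i1 * x$i2 * x$i3 * x$i4)"

definition tensor4_apply3 :: "('n::finite) tensor4 \<Rightarrow> real ^ 'n \<Rightarrow> real ^ 'n" where
  "tensor4_apply3 T x = (\<chi> i. \<Sum>i2\<in>UNIV. \<Sum>i3\<in>UNIV. \<Sum>i4\<in>UNIV.
      T i i2 i3 i4 * x$i2 * x$i3 * x$i4)"

definition Z_eigenvalue :: "('n::finite) tensor4 \<Rightarrow> real \<Rightarrow> bool" where
  "Z_eigenvalue T lam \<longleftrightarrow> (\<exists>x::real^'n. tensor4_apply3 T x = lam *\<^sub>R x \<and> x \<bullet> x = 1)"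

end

theory Submission
  imports Defs
begin

text \<open>Writing A_i for the matrix slice (a_ijk)_jk, the tensor B is the sum of the outer
  products A_i \<otimes> A_i, so its quartic form is the sum of squares of the quadratic forms
  x^T A_i x. A quartic form does not change when the last three indices of the tensor are
  permuted, so the partial symmetrization of B has the same quartic form. For any tensor T, a Z-eigenpair
  (\<lambda>, x) with x^T x = 1 gives \<lambda> = x^T (T x^3) = T x^4.\<close>

definition tensor2_form :: "('n::finite \<Rightarrow> 'n \<Rightarrow> real) \<Rightarrow> real ^ 'n \<Rightarrow> real" where
  "tensor2_form M x = (\<Sum>i\<in>UNIV. \<Sum>j\<in>UNIV. M i j * x$i * x$j)"

lemma tensor4_form_add:
  "tensor4_form (\<lambda>i1 i2 i3 i4. S i1 i2 i3 i4 + T i1 i2 i3 i4) x = tensor4_form S x + tensor4_form T x"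
  unfolding tensor4_form_def by (simp add: distrib_right sum.distrib)

lemma tensor4_form_divide:
  "tensor4_form (\<lambda>i1 i2 i3 i4. T i1 i2 i3 i4 / c) x = tensor4_form T x / c"
  unfolding tensor4_form_def by (simp add: sum_divide_distrib)

lemma tensor4_form_swap_23:
  "tensor4_form (\<lambda>i1 i2 i3 i4. T i1 i3 i2 i4) x = tensor4_form T x"
  unfolding tensor4_form_def
  by (subst sum.swap) (simp add: mult_ac)

lemma tensor4_form_rotate_234:
  "tensor4_form (\<lambda>i1 i2 i3 i4. T i1 i4 i2 i3) x = tensor4_form T x"
  unfolding tensor4_form_def
  by (subst (2) sum.swap, subst sum.swap) (simp add: mult_ac)

lemma tensor4_form_sum:
  "tensor4_form (\<lambda>i1 i2 i3 i4. \<Sum>i\<in>I. T i i1 i2 i3 i4) x = (\<Sum>i\<in>I. tensor4_form (T i) x)"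
proof (induction I rule: infinite_finite_induct)
  case (infinite I)
  then show ?case by (simp add: tensor4_form_def)
next
  case empty
  then show ?case by (simp add: tensor4_form_def)
next
  case (insert i I)
  then show ?case by (simp add: tensor4_form_add)
qed

lemma tensor4_form_outer:
  "tensor4_form (\<lambda>i1 i2 i3 i4. P i1 i2 * Q i3 i4) x = tensor2_form P x * tensor2_form Q x"
  unfolding tensor4_form_def tensor2_form_def sum_distrib_right unfolding sum_distrib_left
  by (simp add: mult_ac)

lemma tensor4_form_tensorB:
  "tensor4_form (tensorB A) x = (\<Sum>i\<in>UNIV. (tensor2_form (A i) x)\<^sup>2)"
  unfolding tensorB_def tensor4_form_sum tensor4_form_outer power2_eq_square ..

lemma tensor4_form_tensorB_nonneg: "tensor4_form (tensorB A) x \<ge> 0"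
  unfolding tensor4_form_tensorB by (simp add: sum_nonneg)

lemma tensor4_form_tensorBbar: "tensor4_form (tensorBbar A) x = tensor4_form (tensorB A) x"
proof -
  let ?B = "tensorB A"
  have "tensor4_form (tensorBbar A) x = (tensor4_form ?B x
      + tensor4_form (\<lambda>i1 i2 i3 i4. ?B i1 i3 i2 i4) x + tensor4_form (\<lambda>i1 i2 i3 i4. ?B i1 i4 i2 i3) x) / 3"
    unfolding tensorBbar_def Let_def tensor4_form_divide tensor4_form_add ..
  also have "\<dots> = (tensor4_form ?B x + tensor4_form ?B x + tensor4_form ?B x) / 3"
    by (simp only: tensor4_form_swap_23[of ?B] tensor4_form_rotate_234[of ?B])
  finally show ?thesis
    by simp
qed

lemma inner_tensor4_apply3: "x \<bullet> tensor4_apply3 T x = tensor4_form T x"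
  unfolding tensor4_apply3_def tensor4_form_def inner_vec_def
  by (simp add: sum_distrib_left mult_ac)

lemma Z_eigenvalue_nonneg_if_psd:
  assumes psd: "\<And>x. tensor4_form T x \<ge> 0" and "Z_eigenvalue T lam"
  shows "lam \<ge> 0"
proof -
  obtain x where eig: "tensor4_apply3 T x = lam *\<^sub>R x" and unit: "x \<bullet> x = 1"
    using \<open>Z_eigenvalue T lam\<close> unfolding Z_eigenvalue_def by blast
  have "lam = x \<bullet> tensor4_apply3 T x"
    by (simp add: eig unit)
  also have "\<dots> = tensor4_form T x"
    by (rule inner_tensor4_apply3)
  finally show ?thesis
    using psd by simp
qed

theorem theorem1p1:
  fixes A :: "('n::finite) tensor3"
  assumes "piezo_type A"
  shows "(\<forall>x::real^'n. tensor4_form (tensorBbar A) x \<ge> 0) \<and>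
         (\<forall>lam. Z_eigenvalue (tensorBbar A) lam \<longrightarrow> lam \<ge> 0)"
proof -
  have "tensor4_form (tensorBbar A) x \<ge> 0" for x :: "real^'n"
    unfolding tensor4_form_tensorBbar by (rule tensor4_form_tensorB_nonneg)
  then show ?thesis
    using Z_eigenvalue_nonneg_if_psd by blast
qed

end
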